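(* Let $A\in\mathbb{C}^{m\times n}$ have rank $r$, $B\in\mathbb{C}^{m\times n}$ have rank $s$, and $E=B-A$. Then $$\|B^{\dagger}-A^{\dagger}\|_{F}^{2}\geq\max\big\{\beta'_{1}+\|B^{\dagger}EA^{\dagger}\|_{F}^{2},\ \beta'_{2}+\|A^{\dagger}EB^{\dagger}\|_{F}^{2}\big\},$$ where $$\beta'_{1}:=\frac{\|E\|_{F}^{2}-\|EB^{\dagger}B\|_{F}^{2}}{\|A\|_{2}^{4}}+\frac{\|E\|_{F}^{2}-\|AA^{\dagger}E\|_{F}^{2}}{\|B\|_{2}^{4}},\qquad \beta'_{2}:=\frac{\|E\|_{F}^{2}-\|BB^{\dagger}E\|_{F}^{2}}{\|A\|_{2}^{4}}+\frac{\|E\|_{F}^{2}-\|EA^{\dagger}A\|_{F}^{2}}{\|B\|_{2}^{4}}.$$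
   Context: $M^{\dagger}$ denotes the Moore–Penrose inverse of $M$, $\|\cdot\|_{2}$ the spectral norm and $\|\cdot\|_{F}$ the Frobenius norm. *)

theory Defs
  imports "HOL-Analysis.Analysis"
begin

text \<open>Complex m x n matrices are represented as complex^'n^'m (rows indexed by 'm).\<close>

definition conj_transpose :: "complex^'n^'m \<Rightarrow> complex^'m^'n" where
  "conj_transpose A = (\<chi> i j. cnj (A $ j $ i))"

definition moore_penrose :: "complex^'n^'m \<Rightarrow> complex^'m^'n" where
  "moore_penrose A = (THE X. A ** X ** A = A \<and> X ** A ** X = X \<and>
       conj_transpose (A ** X) = A ** X \<and> conj_transpose (X ** A) = X ** A)"

definition frob_norm :: "complex^'n^'m \<Rightarrow> real" where
  "frob_norm A = sqrt (\<Sum>i\<in>UNIV. \<Sum>j\<in>UNIV. (cmod (A $ i $ j))\<^sup>2)"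

definition spec_norm :: "complex^'n^'m \<Rightarrow> real" where
  "spec_norm A = onorm (\<lambda>x. A *v x)"

end

(*
  Let P = A A\<^sup>\<dagger> and Q = B\<^sup>\<dagger> B, the orthogonal projections onto the range of A and the row
  space of B, and D = B\<^sup>\<dagger> - A\<^sup>\<dagger>. Splitting D into the four blocks Q D P, Q D (I - P),
  (I - Q) D P, (I - Q) D (I - P) is orthogonal for the Frobenius norm, and the Penrose equations
  identify the first three blocks as -B\<^sup>\<dagger> E A\<^sup>\<dagger>, B\<^sup>\<dagger> (I - P) and -(I - Q) A\<^sup>\<dagger>.
  Now \<parallel>E\<parallel>\<^sup>2 - \<parallel>A A\<^sup>\<dagger> E\<parallel>\<^sup>2 = \<parallel>(I - P) B\<parallel>\<^sup>2, and writing B = (B\<^sup>\<dagger>)\<^sup>H B\<^sup>H B gives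
  \<parallel>(I - P) B\<parallel> \<le> \<parallel>B\<parallel>\<^sub>2\<^sup>2 \<parallel>B\<^sup>\<dagger> (I - P)\<parallel>; symmetrically \<parallel>E\<parallel>\<^sup>2 - \<parallel>E B\<^sup>\<dagger> B\<parallel>\<^sup>2 = \<parallel>A (I - Q)\<parallel>\<^sup>2 and
  A = A A\<^sup>H (A\<^sup>\<dagger>)\<^sup>H gives \<parallel>A (I - Q)\<parallel> \<le> \<parallel>A\<parallel>\<^sub>2\<^sup>2 \<parallel>(I - Q) A\<^sup>\<dagger>\<parallel>. This yields the first
  bound; exchanging A and B, which replaces E by -E, yields the second.
*)

theory Submission
  imports Defs
begin

notation conj_transpose (\<open>_\<^sup>H\<close> [1000] 999)
notation moore_penrose (\<open>_\<^sup>\<dagger>\<close> [1000] 999)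

lemma conj_transpose_conj_transpose [simp]: "(A\<^sup>H)\<^sup>H = A"
  by (simp add: conj_transpose_def vec_eq_iff)

lemma conj_transpose_mult: "(A ** B)\<^sup>H = B\<^sup>H ** A\<^sup>H"
  by (simp add: conj_transpose_def matrix_matrix_mult_def vec_eq_iff cnj_sum mult.commute)

lemma conj_transpose_diff: "(A - B)\<^sup>H = A\<^sup>H - B\<^sup>H"
  by (simp add: conj_transpose_def vec_eq_iff)

lemma conj_transpose_mat_1 [simp]: "(mat 1 :: complex^'n^'n)\<^sup>H = mat 1"
  by (simp add: conj_transpose_def vec_eq_iff mat_def)

lemma inner_complex_eq_Re_mult_cnj: "inner (a::complex) b = Re (a * cnj b)"
  by (simp add: inner_complex_def)

lemma inner_matrix_vector_conj_transpose: "inner (M *v x) y = inner x (M\<^sup>H *v y)"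
proof -
  have "inner (M *v x) y = (\<Sum>i\<in>UNIV. \<Sum>j\<in>UNIV. Re (M$i$j * x$j * cnj (y$i)))"
    by (simp add: inner_vec_def matrix_vector_mult_def inner_complex_eq_Re_mult_cnj sum_distrib_right Re_sum)
  also have "\<dots> = (\<Sum>j\<in>UNIV. \<Sum>i\<in>UNIV. Re (M$i$j * x$j * cnj (y$i)))"
    by (rule sum.swap)
  also have "\<dots> = inner x (M\<^sup>H *v y)"
    by (simp add: inner_vec_def matrix_vector_mult_def inner_complex_eq_Re_mult_cnj conj_transpose_def
        cnj_sum sum_distrib_left Re_sum mult.commute mult.left_commute)
  finally show ?thesis .
qed

lemma matrix_diff_ldistrib: "(A::'a::ring_1^'n^'m) ** (B - C) = A ** B - A ** C"
  by (simp add: matrix_matrix_mult_def vec_eq_iff sum_subtractf right_diff_distrib)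

lemma matrix_diff_rdistrib: "((B::'a::ring_1^'n^'m) - C) ** A = B ** A - C ** A"
  by (simp add: matrix_matrix_mult_def vec_eq_iff sum_subtractf left_diff_distrib)

lemma matrix_mul_lminus: "(- (B::'a::ring_1^'n^'m)) ** A = - (B ** A)"
  by (simp add: matrix_matrix_mult_def vec_eq_iff sum_negf)

lemma matrix_mul_rminus: "(B::'a::ring_1^'n^'m) ** (- A) = - (B ** A)"
  by (simp add: matrix_matrix_mult_def vec_eq_iff sum_negf)

(* Absorption identities in the left-nested form that simp produces with matrix_mul_assoc. *)
lemma matrix_mul_left_extend:
  "(A::'a::semiring_1^'n^'m) ** B ** C = D \<Longrightarrow> X ** A ** B ** C = X ** D"
  by (simp add: matrix_mul_assoc[symmetric])

lemma column_matrix_matrix_mult: "column j (M ** X) = M *v column j X"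
  by (simp add: column_def matrix_matrix_mult_def matrix_vector_mult_def vec_eq_iff)

lemma frob_norm_nonneg: "0 \<le> frob_norm X"
  by (simp add: frob_norm_def sum_nonneg)

lemma frob_norm_sq_columns: "(frob_norm X)\<^sup>2 = (\<Sum>j\<in>UNIV. (norm (column j X))\<^sup>2)"
  by (simp add: frob_norm_def norm_vec_def L2_set_def column_def sum_nonneg) (rule sum.swap)

lemma frob_norm_conj_transpose: "frob_norm (X\<^sup>H) = frob_norm X"
  unfolding frob_norm_def conj_transpose_def by simp (rule sum.swap)

lemma frob_norm_uminus: "frob_norm (- X) = frob_norm X"
  by (simp add: frob_norm_def)

lemma frob_norm_conj_transpose_mult_commute: "frob_norm (X\<^sup>H ** Y) = frob_norm (Y\<^sup>H ** X)"
  by (metis frob_norm_conj_transpose conj_transpose_mult conj_transpose_conj_transpose)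

lemma spec_norm_nonneg: "0 \<le> spec_norm A"
  unfolding spec_norm_def by (rule onorm_pos_le) simp

lemma norm_matrix_vector_le_spec_norm: "norm (A *v x) \<le> spec_norm A * norm x"
  unfolding spec_norm_def by (rule onorm) simp

lemma norm_conj_transpose_vector_le_spec_norm: "norm (A\<^sup>H *v y) \<le> spec_norm A * norm y"
proof -
  let ?z = "A\<^sup>H *v y"
  have "(norm ?z)\<^sup>2 = inner (A *v ?z) y"
    by (simp add: power2_norm_eq_inner inner_matrix_vector_conj_transpose)
  also have "\<dots> \<le> norm (A *v ?z) * norm y"
    by (rule norm_cauchy_schwarz)
  also have "\<dots> \<le> spec_norm A * norm ?z * norm y"
    by (rule mult_right_mono[OF norm_matrix_vector_le_spec_norm]) simp
  finally have "norm ?z * norm ?z \<le> (spec_norm A * norm y) * norm ?z"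
    by (simp add: power2_eq_square algebra_simps)
  then show ?thesis
    using spec_norm_nonneg[of A] by (cases "norm ?z = 0") (simp_all add: mult_le_cancel_right)
qed

lemma spec_norm_conj_transpose: "spec_norm (A\<^sup>H) = spec_norm A"
proof -
  have le: "spec_norm (M\<^sup>H) \<le> spec_norm M" for M :: "complex^'k^'l"
    unfolding spec_norm_def[of "M\<^sup>H"]
    by (rule onorm_le) (simp add: norm_conj_transpose_vector_le_spec_norm)
  show ?thesis
    using le[of A] le[of "A\<^sup>H"] by simp
qed

lemma frob_norm_mult_le_left: "frob_norm (M ** X) \<le> spec_norm M * frob_norm X"
proof -
  have "(frob_norm (M ** X))\<^sup>2 = (\<Sum>j\<in>UNIV. (norm (M *v column j X))\<^sup>2)"
    by (simp add: frob_norm_sq_columns column_matrix_matrix_mult)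
  also have "\<dots> \<le> (\<Sum>j\<in>UNIV. (spec_norm M * norm (column j X))\<^sup>2)"
    by (intro sum_mono power_mono norm_matrix_vector_le_spec_norm) simp
  also have "\<dots> = (spec_norm M * frob_norm X)\<^sup>2"
    by (simp add: frob_norm_sq_columns power_mult_distrib sum_distrib_left)
  finally show ?thesis
    using spec_norm_nonneg[of M] frob_norm_nonneg[of X] by (simp add: power2_le_iff_abs_le)
qed

lemma frob_norm_mult_le_right: "frob_norm (X ** M) \<le> frob_norm X * spec_norm M"
  using frob_norm_mult_le_left[of "M\<^sup>H" "X\<^sup>H"]
  by (simp add: conj_transpose_mult[symmetric] frob_norm_conj_transpose spec_norm_conj_transpose
      mult.commute)

definition orth_proj :: "complex^'n^'n \<Rightarrow> bool" where
  "orth_proj P \<longleftrightarrow> P\<^sup>H = P \<and> P ** P = P"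

lemma orth_proj_complement:
  assumes "orth_proj P"
  shows "orth_proj (mat 1 - P)"
  using assms by (simp add: orth_proj_def conj_transpose_diff matrix_diff_ldistrib matrix_diff_rdistrib)

lemma norm_sq_orth_proj_split:
  assumes "orth_proj P"
  shows "(norm x)\<^sup>2 = (norm (P *v x))\<^sup>2 + (norm ((mat 1 - P) *v x))\<^sup>2"
proof -
  have "inner (P *v x) (x - P *v x) = inner x (P *v x - (P ** P) *v x)"
    using assms by (simp add: orth_proj_def inner_matrix_vector_conj_transpose
        matrix_vector_mult_diff_distrib matrix_vector_mul_assoc)
  also have "\<dots> = 0"
    using assms by (simp add: orth_proj_def)
  finally have "orthogonal (P *v x) (x - P *v x)"
    by (simp add: orthogonal_def)
  from norm_add_Pythagorean[OF this] show ?thesis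
    by (simp add: matrix_vector_mult_diff_rdistrib)
qed

lemma frob_norm_sq_orth_proj_left:
  assumes "orth_proj P"
  shows "(frob_norm X)\<^sup>2 = (frob_norm (P ** X))\<^sup>2 + (frob_norm ((mat 1 - P) ** X))\<^sup>2"
proof -
  have "(frob_norm X)\<^sup>2 = (\<Sum>j\<in>UNIV. (norm (P *v column j X))\<^sup>2 + (norm ((mat 1 - P) *v column j X))\<^sup>2)"
    unfolding frob_norm_sq_columns by (rule sum.cong[OF refl norm_sq_orth_proj_split[OF assms]])
  then show ?thesis
    by (simp add: frob_norm_sq_columns column_matrix_matrix_mult sum.distrib)
qed

lemma frob_norm_sq_orth_proj_right:
  assumes "orth_proj P"
  shows "(frob_norm X)\<^sup>2 = (frob_norm (X ** P))\<^sup>2 + (frob_norm (X ** (mat 1 - P)))\<^sup>2"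
proof -
  have herm: "P\<^sup>H = P" "(mat 1 - P)\<^sup>H = mat 1 - P"
    using assms orth_proj_complement[OF assms] by (simp_all add: orth_proj_def)
  have "(frob_norm X)\<^sup>2 = (frob_norm (X\<^sup>H))\<^sup>2"
    by (simp only: frob_norm_conj_transpose)
  also have "\<dots> = (frob_norm (P ** X\<^sup>H))\<^sup>2 + (frob_norm ((mat 1 - P) ** X\<^sup>H))\<^sup>2"
    by (rule frob_norm_sq_orth_proj_left[OF assms])
  also have "\<dots> = (frob_norm ((X ** P)\<^sup>H))\<^sup>2 + (frob_norm ((X ** (mat 1 - P))\<^sup>H))\<^sup>2"
    by (simp only: conj_transpose_mult herm conj_transpose_conj_transpose)
  finally show ?thesis
    by (simp only: frob_norm_conj_transpose)
qed

lemma normal_equation_solvable: "\<exists>x. (A\<^sup>H ** A) *v x = A\<^sup>H *v w"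
proof -
  let ?M = "A\<^sup>H ** A"
  let ?S = "range (\<lambda>x. ?M *v x)"
  have "subspace ?S"
    by (rule linear_subspace_image[OF _ subspace_UNIV]) simp
  then have span_S: "span ?S = ?S"
    by (rule span_eq_iff[THEN iffD2])
  obtain y z where y: "y \<in> span ?S" and z: "\<And>u. u \<in> span ?S \<Longrightarrow> orthogonal z u"
    and decomp: "A\<^sup>H *v w = y + z"
    by (rule orthogonal_subspace_decomp_exists[of ?S "A\<^sup>H *v w"]) blast
  have "orthogonal z (?M *v z)"
    using z span_S by auto
  then have "inner (A *v z) (A *v z) = 0"
    by (simp add: orthogonal_def matrix_vector_mul_assoc[symmetric] inner_matrix_vector_conj_transpose)
  then have "inner z (A\<^sup>H *v w) = 0"
    by (simp add: inner_matrix_vector_conj_transpose[symmetric])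
  moreover have "inner z y = 0"
    using z y orthogonal_def by blast
  ultimately have "z = 0"
    using decomp by (simp add: inner_add_right)
  then show ?thesis
    using decomp y span_S by auto
qed

lemma normal_equation_matrix_solvable: "\<exists>Y. A\<^sup>H ** A ** Y = A\<^sup>H"
proof -
  have "\<forall>j. \<exists>x. (A\<^sup>H ** A) *v x = A\<^sup>H *v column j (mat 1)"
    using normal_equation_solvable by blast
  then obtain x where x: "\<And>j. (A\<^sup>H ** A) *v x j = A\<^sup>H *v column j (mat 1)"
    by metis
  define Y where "Y = (\<chi> i j. x j $ i)"
  have "column j (A\<^sup>H ** A ** Y) = column j (A\<^sup>H ** mat 1)" for j
  proof -
    have "column j Y = x j"
      by (simp add: Y_def column_def vec_eq_iff)
    then show ?thesis
      by (simp only: column_matrix_matrix_mult x)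
  qed
  then have "A\<^sup>H ** A ** Y = A\<^sup>H"
    by (simp add: column_def vec_eq_iff)
  then show ?thesis ..
qed

lemma normal_equation_range_proj:
  assumes Y: "A\<^sup>H ** A ** Y = A\<^sup>H"
  shows "(A ** Y)\<^sup>H = A ** Y" and "A ** Y ** A = A"
proof -
  let ?P = "A ** Y"
  have "(?P)\<^sup>H ** ?P = Y\<^sup>H ** (A\<^sup>H ** A ** Y)"
    by (simp only: conj_transpose_mult matrix_mul_assoc)
  then have gram: "(?P)\<^sup>H ** ?P = (?P)\<^sup>H"
    by (simp only: Y conj_transpose_mult)
  have "?P = ((?P)\<^sup>H ** ?P)\<^sup>H"
    by (simp only: gram conj_transpose_conj_transpose)
  also have "\<dots> = (?P)\<^sup>H ** ?P"
    by (simp only: conj_transpose_mult conj_transpose_conj_transpose)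
  finally show herm: "(?P)\<^sup>H = ?P"
    by (simp only: gram)
  have "A\<^sup>H ** ?P = A\<^sup>H"
    by (simp only: matrix_mul_assoc Y)
  then have "((?P)\<^sup>H ** A)\<^sup>H = A\<^sup>H"
    by (simp only: conj_transpose_mult conj_transpose_conj_transpose)
  then have "(?P)\<^sup>H ** A = A"
    by (metis conj_transpose_conj_transpose)
  then show "?P ** A = A"
    by (simp only: herm)
qed

definition penrose_conditions :: "complex^'n^'m \<Rightarrow> complex^'m^'n \<Rightarrow> bool" where
  "penrose_conditions A X \<longleftrightarrow> A ** X ** A = A \<and> X ** A ** X = X \<and>
     (A ** X)\<^sup>H = A ** X \<and> (X ** A)\<^sup>H = X ** A"

lemma penrose_conditions_exist: "\<exists>X. penrose_conditions A X"
proof -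
  \<comment> \<open>\<open>A ** Y\<close> and \<open>A\<^sup>H ** Z\<close> project onto the ranges of \<open>A\<close> and \<open>A\<^sup>H\<close>;
    \<open>A\<^sup>H ** Z ** Y\<close> is then the Moore-Penrose inverse.\<close>
  obtain Y where "A\<^sup>H ** A ** Y = A\<^sup>H"
    using normal_equation_matrix_solvable by blast
  from normal_equation_range_proj[OF this]
  have P_herm: "(A ** Y)\<^sup>H = A ** Y" and PA: "A ** Y ** A = A" .
  obtain Z where Z: "(A\<^sup>H)\<^sup>H ** A\<^sup>H ** Z = (A\<^sup>H)\<^sup>H"
    using normal_equation_matrix_solvable by blast
  define Q where "Q = A\<^sup>H ** Z"
  from normal_equation_range_proj[OF Z, folded Q_def]
  have Q_herm: "Q\<^sup>H = Q" and QA: "Q ** A\<^sup>H = A\<^sup>H" .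
  have "A = (Q ** A\<^sup>H)\<^sup>H"
    by (simp only: QA conj_transpose_conj_transpose)
  also have "\<dots> = A ** Q"
    by (simp only: conj_transpose_mult conj_transpose_conj_transpose Q_herm)
  finally have AQ: "A ** Q = A"
    by (rule sym)
  have QQ: "Q ** Q = Q"
    using QA by (metis Q_def matrix_mul_assoc)
  have "Q = Z\<^sup>H ** A"
    by (metis Q_def Q_herm conj_transpose_mult conj_transpose_conj_transpose)
  then have QYA: "Q ** Y ** A = Q"
    by (metis PA matrix_mul_assoc)
  have AX: "A ** (Q ** Y) = A ** Y"
    by (simp add: matrix_mul_assoc AQ)
  have QQY: "Q ** (Q ** Y) = Q ** Y"
    by (simp only: matrix_mul_assoc QQ)
  have "penrose_conditions A (Q ** Y)"
    unfolding penrose_conditions_def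
    by (simp only: AX PA P_herm QQY QYA Q_herm simp_thms)
  then show ?thesis ..
qed

lemma penrose_conditions_unique:
  assumes X1: "penrose_conditions A X1" and X2: "penrose_conditions A X2"
  shows "X1 = X2"
proof -
  have a1: "A ** X1 ** A = A" "X1 ** A ** X1 = X1" "(A ** X1)\<^sup>H = A ** X1" "(X1 ** A)\<^sup>H = X1 ** A"
    using X1 by (auto simp: penrose_conditions_def)
  have a2: "A ** X2 ** A = A" "X2 ** A ** X2 = X2" "(A ** X2)\<^sup>H = A ** X2" "(X2 ** A)\<^sup>H = X2 ** A"
    using X2 by (auto simp: penrose_conditions_def)
  have "X1 = X1 ** (A ** X1)\<^sup>H"
    by (simp add: matrix_mul_assoc a1)
  also have "\<dots> = X1 ** X1\<^sup>H ** (A ** X2 ** A)\<^sup>H"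
    by (simp add: a2 conj_transpose_mult matrix_mul_assoc)
  also have "\<dots> = X1 ** (A ** X1)\<^sup>H ** (A ** X2)\<^sup>H"
    by (simp add: conj_transpose_mult matrix_mul_assoc)
  also have "\<dots> = X1 ** A ** X2"
    by (simp add: a1 a2 matrix_mul_assoc)
  finally have left: "X1 = X1 ** A ** X2" .
  have "X2 = (X2 ** A)\<^sup>H ** X2"
    by (simp add: a2)
  also have "\<dots> = (A ** X1 ** A)\<^sup>H ** X2\<^sup>H ** X2"
    by (simp add: a1 conj_transpose_mult matrix_mul_assoc)
  also have "\<dots> = (X1 ** A)\<^sup>H ** (X2 ** A)\<^sup>H ** X2"
    by (simp add: conj_transpose_mult matrix_mul_assoc)
  also have "\<dots> = X1 ** A ** (X2 ** A) ** X2"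
    by (simp only: a1 a2)
  also have "\<dots> = X1 ** A ** (X2 ** A ** X2)"
    by (simp only: matrix_mul_assoc)
  also have "\<dots> = X1 ** A ** X2"
    by (simp only: a2)
  finally show ?thesis
    using left by simp
qed

lemma penrose_conditions_moore_penrose: "penrose_conditions A (A\<^sup>\<dagger>)"
proof -
  have "\<exists>!X. penrose_conditions A X"
    using penrose_conditions_exist penrose_conditions_unique by blast
  then have "penrose_conditions A (THE X. penrose_conditions A X)"
    by (rule theI')
  then show ?thesis
    by (simp add: moore_penrose_def penrose_conditions_def)
qed

lemma moore_penrose_eqs:
  shows moore_penrose_absorb_left: "A ** A\<^sup>\<dagger> ** A = A"
    and moore_penrose_absorb_right: "A\<^sup>\<dagger> ** A ** A\<^sup>\<dagger> = A\<^sup>\<dagger>"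
    and conj_transpose_mult_moore_penrose: "(A ** A\<^sup>\<dagger>)\<^sup>H = A ** A\<^sup>\<dagger>"
    and conj_transpose_moore_penrose_mult: "(A\<^sup>\<dagger> ** A)\<^sup>H = A\<^sup>\<dagger> ** A"
  using penrose_conditions_moore_penrose[of A] by (simp_all add: penrose_conditions_def)

lemma orth_proj_moore_penrose: "orth_proj (A ** A\<^sup>\<dagger>)" "orth_proj (A\<^sup>\<dagger> ** A)"
  unfolding orth_proj_def
  by (simp_all add: moore_penrose_eqs matrix_mul_assoc[symmetric])
     (simp_all add: matrix_mul_assoc moore_penrose_eqs)

lemma frob_norm_mult_le_moore_penrose_right:
  "frob_norm (X ** B) \<le> (spec_norm B)\<^sup>2 * frob_norm (B\<^sup>\<dagger> ** X\<^sup>H)"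
proof -
  have "B = (B ** B\<^sup>\<dagger>)\<^sup>H ** B"
    by (simp add: conj_transpose_mult_moore_penrose moore_penrose_absorb_left)
  then have "X ** B = X ** (B\<^sup>\<dagger>)\<^sup>H ** B\<^sup>H ** B"
    by (metis conj_transpose_mult matrix_mul_assoc)
  also have "frob_norm \<dots> \<le> frob_norm (X ** (B\<^sup>\<dagger>)\<^sup>H ** B\<^sup>H) * spec_norm B"
    by (rule frob_norm_mult_le_right)
  also have "\<dots> \<le> frob_norm (X ** (B\<^sup>\<dagger>)\<^sup>H) * spec_norm (B\<^sup>H) * spec_norm B"
    by (intro mult_right_mono frob_norm_mult_le_right spec_norm_nonneg)
  also have "\<dots> = (spec_norm B)\<^sup>2 * frob_norm (B\<^sup>\<dagger> ** X\<^sup>H)"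
    using frob_norm_conj_transpose_mult_commute[of "X\<^sup>H" "(B\<^sup>\<dagger>)\<^sup>H"]
    by (simp add: spec_norm_conj_transpose power2_eq_square)
  finally show ?thesis .
qed

lemma frob_norm_mult_le_moore_penrose_left:
  "frob_norm (A ** Y) \<le> (spec_norm A)\<^sup>2 * frob_norm (Y\<^sup>H ** A\<^sup>\<dagger>)"
proof -
  have "A = A ** (A\<^sup>\<dagger> ** A)\<^sup>H"
    by (simp add: conj_transpose_moore_penrose_mult matrix_mul_assoc moore_penrose_absorb_left)
  then have "A ** Y = A ** (A\<^sup>H ** ((A\<^sup>\<dagger>)\<^sup>H ** Y))"
    by (metis conj_transpose_mult matrix_mul_assoc)
  also have "frob_norm \<dots> \<le> spec_norm A * frob_norm (A\<^sup>H ** ((A\<^sup>\<dagger>)\<^sup>H ** Y))"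
    by (rule frob_norm_mult_le_left)
  also have "\<dots> \<le> spec_norm A * (spec_norm (A\<^sup>H) * frob_norm ((A\<^sup>\<dagger>)\<^sup>H ** Y))"
    by (intro mult_left_mono frob_norm_mult_le_left spec_norm_nonneg)
  also have "\<dots> = (spec_norm A)\<^sup>2 * frob_norm (Y\<^sup>H ** A\<^sup>\<dagger>)"
    using frob_norm_conj_transpose_mult_commute[of "A\<^sup>\<dagger>" Y]
    by (simp add: spec_norm_conj_transpose power2_eq_square)
  finally show ?thesis .
qed

lemma frob_norm_sq_diff_left_proj_le:
  "(frob_norm (B - A))\<^sup>2 - (frob_norm (A ** A\<^sup>\<dagger> ** (B - A)))\<^sup>2
     \<le> (spec_norm B) ^ 4 * (frob_norm (B\<^sup>\<dagger> ** (mat 1 - A ** A\<^sup>\<dagger>)))\<^sup>2"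
proof -
  let ?W = "mat 1 - A ** A\<^sup>\<dagger>"
  have W: "orth_proj ?W"
    by (rule orth_proj_complement[OF orth_proj_moore_penrose(1)[of A]])
  have "?W ** A = 0"
    by (simp add: matrix_diff_rdistrib moore_penrose_absorb_left)
  then have "?W ** (B - A) = ?W ** B"
    by (simp add: matrix_diff_ldistrib)
  then have "(frob_norm (B - A))\<^sup>2 - (frob_norm (A ** A\<^sup>\<dagger> ** (B - A)))\<^sup>2 = (frob_norm (?W ** B))\<^sup>2"
    using frob_norm_sq_orth_proj_left[OF orth_proj_moore_penrose(1)[of A], of "B - A"] by simp
  also have "\<dots> \<le> ((spec_norm B)\<^sup>2 * frob_norm (B\<^sup>\<dagger> ** ?W))\<^sup>2"
    using frob_norm_mult_le_moore_penrose_right[of ?W B] W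
    by (simp add: orth_proj_def frob_norm_nonneg power_mono)
  finally show ?thesis
    by (simp add: power_mult_distrib)
qed

lemma frob_norm_sq_diff_right_proj_le:
  "(frob_norm (B - A))\<^sup>2 - (frob_norm ((B - A) ** B\<^sup>\<dagger> ** B))\<^sup>2
     \<le> (spec_norm A) ^ 4 * (frob_norm ((mat 1 - B\<^sup>\<dagger> ** B) ** A\<^sup>\<dagger>))\<^sup>2"
proof -
  let ?V = "mat 1 - B\<^sup>\<dagger> ** B"
  have V: "orth_proj ?V"
    by (rule orth_proj_complement[OF orth_proj_moore_penrose(2)[of B]])
  have "B ** ?V = 0"
    by (simp add: matrix_diff_ldistrib matrix_mul_assoc moore_penrose_absorb_left)
  then have "(B - A) ** ?V = - (A ** ?V)"
    by (simp add: matrix_diff_rdistrib)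
  then have "(frob_norm (B - A))\<^sup>2 - (frob_norm ((B - A) ** B\<^sup>\<dagger> ** B))\<^sup>2 = (frob_norm (A ** ?V))\<^sup>2"
    using frob_norm_sq_orth_proj_right[OF orth_proj_moore_penrose(2)[of B], of "B - A"]
    by (simp add: matrix_mul_assoc frob_norm_uminus)
  also have "\<dots> \<le> ((spec_norm A)\<^sup>2 * frob_norm (?V ** A\<^sup>\<dagger>))\<^sup>2"
    using frob_norm_mult_le_moore_penrose_left[of A ?V] V
    by (simp add: orth_proj_def frob_norm_nonneg power_mono)
  finally show ?thesis
    by (simp add: power_mult_distrib)
qed

lemma frob_norm_sq_moore_penrose_diff_ge:
  "(frob_norm (B\<^sup>\<dagger> ** (B - A) ** A\<^sup>\<dagger>))\<^sup>2 + (frob_norm (B\<^sup>\<dagger> ** (mat 1 - A ** A\<^sup>\<dagger>)))\<^sup>2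
     + (frob_norm ((mat 1 - B\<^sup>\<dagger> ** B) ** A\<^sup>\<dagger>))\<^sup>2 \<le> (frob_norm (B\<^sup>\<dagger> - A\<^sup>\<dagger>))\<^sup>2"
proof -
  define P where "P = A ** A\<^sup>\<dagger>"
  define Q where "Q = B\<^sup>\<dagger> ** B"
  define D where "D = B\<^sup>\<dagger> - A\<^sup>\<dagger>"
  note absorb = moore_penrose_absorb_left moore_penrose_absorb_right
  note absorb_ext = absorb[THEN matrix_mul_left_extend]
  have "Q ** D ** P = - (B\<^sup>\<dagger> ** (B - A) ** A\<^sup>\<dagger>)"
    unfolding P_def Q_def D_def
    by (simp add: matrix_diff_ldistrib matrix_diff_rdistrib matrix_mul_assoc absorb absorb_ext)
  moreover have "Q ** D ** (mat 1 - P) = B\<^sup>\<dagger> ** (mat 1 - P)"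
    unfolding P_def Q_def D_def
    by (simp add: matrix_diff_ldistrib matrix_diff_rdistrib matrix_mul_assoc absorb absorb_ext)
  moreover have "(mat 1 - Q) ** D ** P = - ((mat 1 - Q) ** A\<^sup>\<dagger>)"
    unfolding P_def Q_def D_def
    by (simp add: matrix_diff_ldistrib matrix_diff_rdistrib matrix_mul_assoc absorb absorb_ext)
  moreover have "(frob_norm D)\<^sup>2 = (frob_norm (Q ** D ** P))\<^sup>2 + (frob_norm (Q ** D ** (mat 1 - P)))\<^sup>2
      + (frob_norm ((mat 1 - Q) ** D ** P))\<^sup>2 + (frob_norm ((mat 1 - Q) ** D ** (mat 1 - P)))\<^sup>2"
    using frob_norm_sq_orth_proj_left[OF orth_proj_moore_penrose(2)[of B], of D]
      frob_norm_sq_orth_proj_right[OF orth_proj_moore_penrose(1)[of A], of "Q ** D"]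
      frob_norm_sq_orth_proj_right[OF orth_proj_moore_penrose(1)[of A], of "(mat 1 - Q) ** D"]
    by (simp add: P_def Q_def)
  ultimately show ?thesis
    by (simp add: D_def P_def Q_def frob_norm_uminus)
qed

lemma frob_norm_sq_moore_penrose_diff_lower_bound:
  fixes A B :: "complex^'n^'m"
  defines "E \<equiv> B - A"
  shows "(frob_norm (B\<^sup>\<dagger> ** E ** A\<^sup>\<dagger>))\<^sup>2
      + ((frob_norm E)\<^sup>2 - (frob_norm (E ** B\<^sup>\<dagger> ** B))\<^sup>2) / (spec_norm A) ^ 4
      + ((frob_norm E)\<^sup>2 - (frob_norm (A ** A\<^sup>\<dagger> ** E))\<^sup>2) / (spec_norm B) ^ 4
    \<le> (frob_norm (B\<^sup>\<dagger> - A\<^sup>\<dagger>))\<^sup>2"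
proof -
  \<comment> \<open>If a spectral norm vanishes, the quotient is \<open>0\<close> by the convention \<open>x / 0 = 0\<close>.\<close>
  have "((frob_norm E)\<^sup>2 - (frob_norm (E ** B\<^sup>\<dagger> ** B))\<^sup>2) / (spec_norm A) ^ 4
      \<le> (frob_norm ((mat 1 - B\<^sup>\<dagger> ** B) ** A\<^sup>\<dagger>))\<^sup>2"
    using frob_norm_sq_diff_right_proj_le[where A = A and B = B] spec_norm_nonneg[of A]
    by (auto simp: E_def divide_le_eq mult.commute)
  moreover have "((frob_norm E)\<^sup>2 - (frob_norm (A ** A\<^sup>\<dagger> ** E))\<^sup>2) / (spec_norm B) ^ 4
      \<le> (frob_norm (B\<^sup>\<dagger> ** (mat 1 - A ** A\<^sup>\<dagger>)))\<^sup>2"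
    using frob_norm_sq_diff_left_proj_le[where A = A and B = B] spec_norm_nonneg[of B]
    by (auto simp: E_def divide_le_eq mult.commute)
  ultimately show ?thesis
    using frob_norm_sq_moore_penrose_diff_ge[where A = A and B = B] by (simp add: E_def)
qed

theorem corollary3p7:
  fixes A B :: "complex^'n^'m"
  defines "E \<equiv> B - A"
  defines "\<beta>1 \<equiv> ((frob_norm E)\<^sup>2 - (frob_norm (E ** moore_penrose B ** B))\<^sup>2) / (spec_norm A) ^ 4
                 + ((frob_norm E)\<^sup>2 - (frob_norm (A ** moore_penrose A ** E))\<^sup>2) / (spec_norm B) ^ 4"
  defines "\<beta>2 \<equiv> ((frob_norm E)\<^sup>2 - (frob_norm (B ** moore_penrose B ** E))\<^sup>2) / (spec_norm A) ^ 4
                 + ((frob_norm E)\<^sup>2 - (frob_norm (E ** moore_penrose A ** A))\<^sup>2) / (spec_norm B) ^ 4"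
  shows "(frob_norm (moore_penrose B - moore_penrose A))\<^sup>2 \<ge>
           max (\<beta>1 + (frob_norm (moore_penrose B ** E ** moore_penrose A))\<^sup>2)
               (\<beta>2 + (frob_norm (moore_penrose A ** E ** moore_penrose B))\<^sup>2)"
proof (rule max.boundedI)
  show "\<beta>1 + (frob_norm (B\<^sup>\<dagger> ** E ** A\<^sup>\<dagger>))\<^sup>2 \<le> (frob_norm (B\<^sup>\<dagger> - A\<^sup>\<dagger>))\<^sup>2"
    using frob_norm_sq_moore_penrose_diff_lower_bound[where A = A and B = B]
    by (simp add: \<beta>1_def E_def)
  have swap: "A - B = - E" "A\<^sup>\<dagger> - B\<^sup>\<dagger> = - (B\<^sup>\<dagger> - A\<^sup>\<dagger>)"
    by (simp_all add: E_def)
  show "\<beta>2 + (frob_norm (A\<^sup>\<dagger> ** E ** B\<^sup>\<dagger>))\<^sup>2 \<le> (frob_norm (B\<^sup>\<dagger> - A\<^sup>\<dagger>))\<^sup>2"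
    using frob_norm_sq_moore_penrose_diff_lower_bound[where A = B and B = A]
    unfolding swap matrix_mul_lminus matrix_mul_rminus frob_norm_uminus
    by (simp add: \<beta>2_def)
qed

end
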